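(* Let $q\ge 3$, $k\ge 1$ and $h\geq 2$ be integers with $h\le \lfloor q/2\rfloor$. Then $$SO(S_{q,h,k})=(2qk-8k+8)\sqrt{2}+(8k-8)\sqrt{5}.$$
   Context: For a finite simple graph $G$, $SO(G)=\sum_{uv\in E(G)}\sqrt{d_u^2+d_v^2}$, where $d_u$ is the degree of $u$ in $G$ (the Sombor index). The spiro-chain $S_{q,h,k}$ is the chain of $k$ disjoint copies $G_1,\ldots,G_k$ of the cycle $C_q$ with respect to vertices $x_i,y_i\in V(G_i)$ at distance $h$ in $G_i$; i.e. it is obtained from the disjoint union of the $k$ cycles by identifying $y_i$ with $x_{i+1}$ for $i=1,\ldots,k-1$. Thus in each cycle the distance between two consecutive contact vertices is $h$. *)

theory Defs
  imports Complex_Main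
begin

definition degree :: "'a set set \<Rightarrow> 'a \<Rightarrow> nat" where
  "degree E v = card {e \<in> E. v \<in> e}"

text \<open>For an edge e = {u,v} (u \<noteq> v) the inner sum is d_u^2 + d_v^2.\<close>
definition sombor :: "'a set set \<Rightarrow> real" where
  "sombor E = (\<Sum>e\<in>E. sqrt (\<Sum>w\<in>e. (real (degree E w))^2))"

text \<open>Distance in the cycle C_q with vertex set {0..<q}, j adjacent to (j+1) mod q.\<close>
definition cyc_dist :: "nat \<Rightarrow> nat \<Rightarrow> nat \<Rightarrow> nat" where
  "cyc_dist q a b = (let d = (if a \<le> b then b - a else a - b) in min d (q - d))"

text \<open>Spiro chain: copy i (i < k) of C_q has raw vertices (i,j), j < q.
  Contact vertices x i, y i in copy i; y i is identified with x (i+1)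
  for i+1 < k.  spiro_rep sends a raw vertex to its representative.\<close>
definition spiro_rep :: "nat \<Rightarrow> (nat \<Rightarrow> nat) \<Rightarrow> (nat \<Rightarrow> nat) \<Rightarrow> nat \<times> nat \<Rightarrow> nat \<times> nat" where
  "spiro_rep k x y v = (case v of (i, j) \<Rightarrow>
      if i + 1 < k \<and> j = y i then (i + 1, x (i + 1)) else (i, j))"

definition spiro_V :: "nat \<Rightarrow> nat \<Rightarrow> (nat \<Rightarrow> nat) \<Rightarrow> (nat \<Rightarrow> nat) \<Rightarrow> (nat \<times> nat) set" where
  "spiro_V q k x y = spiro_rep k x y ` ({0..<k} \<times> {0..<q})"

definition spiro_E :: "nat \<Rightarrow> nat \<Rightarrow> (nat \<Rightarrow> nat) \<Rightarrow> (nat \<Rightarrow> nat) \<Rightarrow> (nat \<times> nat) set set" where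
  "spiro_E q k x y = {{spiro_rep k x y (i, j), spiro_rep k x y (i, (j + 1) mod q)} | i j. i < k \<and> j < q}"

end

theory Submission
  imports Defs
begin

text \<open>Index the edges of the spiro-chain by the edges (i,j)(i,j+1) of the k disjoint
  copies of C_q; gluing never turns such an edge into a loop or merges two of them.  A vertex
  then has twice as many incident edges as raw vertices glued into it, so the k - 1 cut vertices
  have degree 4 and all others degree 2.  As the contact vertices of one copy are at distance
  h \<ge> 2, no edge joins two cut vertices: 4(k - 1) edges contribute sqrt 20 and the remaining
  qk - 4(k - 1) edges contribute sqrt 8.\<close>

lemma cyc_dist_ge2_nonadjacent:
  assumes "a < q" "b < q" "2 \<le> cyc_dist q a b"
  shows "a \<noteq> b" "b \<noteq> Suc a mod q" "a \<noteq> Suc b mod q"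
  using assms unfolding cyc_dist_def Let_def
  by (auto simp: mod_Suc split: if_splits)

lemma degree_image_edges:
  fixes f :: "'i \<Rightarrow> 'v" and \<sigma> :: "'i \<Rightarrow> 'i"
  assumes "finite I" "bij_betw \<sigma> I I" "inj_on (\<lambda>p. {f p, f (\<sigma> p)}) I"
    and "\<And>p. p \<in> I \<Longrightarrow> f p \<noteq> f (\<sigma> p)"
  shows "degree ((\<lambda>p. {f p, f (\<sigma> p)}) ` I) v = 2 * card {p \<in> I. f p = v}"
proof -
  define A where "A = {p \<in> I. f p = v}"
  define B where "B = {p \<in> I. \<sigma> p \<in> A}"
  have "{e \<in> (\<lambda>p. {f p, f (\<sigma> p)}) ` I. v \<in> e} = (\<lambda>p. {f p, f (\<sigma> p)}) ` (A \<union> B)"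
    using assms(2) by (auto simp: A_def B_def bij_betw_def)
  moreover have "inj_on (\<lambda>p. {f p, f (\<sigma> p)}) (A \<union> B)"
    using assms(3) by (rule inj_on_subset) (auto simp: A_def B_def)
  moreover have "A \<inter> B = {}"
    using assms(4) by (auto simp: A_def B_def) (metis)
  moreover have "card B = card A"
  proof -
    have "\<sigma> ` B = A"
      using assms(2) by (auto simp: A_def B_def bij_betw_def)
    then have "bij_betw \<sigma> B A"
      using assms(2) by (rule bij_betw_subset[rotated 2]) (auto simp: B_def)
    then show ?thesis
      by (simp add: bij_betw_same_card)
  qed
  moreover have "finite A" "finite B"
    using assms(1) by (auto simp: A_def B_def)
  ultimately show ?thesis
    unfolding degree_def by (simp add: card_image card_Un_disjoint A_def)
qed

lemma sombor_image_edges: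
  fixes f :: "'i \<Rightarrow> 'v" and \<sigma> :: "'i \<Rightarrow> 'i"
  assumes "finite I" "bij_betw \<sigma> I I" "inj_on (\<lambda>p. {f p, f (\<sigma> p)}) I"
    and "\<And>p. p \<in> I \<Longrightarrow> f p \<noteq> f (\<sigma> p)"
  shows "sombor ((\<lambda>p. {f p, f (\<sigma> p)}) ` I)
    = (\<Sum>p\<in>I. sqrt ((2 * real (card {p' \<in> I. f p' = f p}))\<^sup>2
                   + (2 * real (card {p' \<in> I. f p' = f (\<sigma> p)}))\<^sup>2))"
  unfolding sombor_def
  by (simp add: sum.reindex[OF assms(3)] degree_image_edges[OF assms] assms(4))

lemma sqrt_spiro_edge_term:
  fixes a b :: nat
  assumes "a + b \<le> 1"
  shows "sqrt ((2 * real (1 + a))\<^sup>2 + (2 * real (1 + b))\<^sup>2)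
    = 2 * sqrt 2 + 2 * (sqrt 5 - sqrt 2) * (real a + real b)"
proof -
  have "sqrt 8 = 2 * sqrt 2" "sqrt 20 = 2 * sqrt 5"
    using real_sqrt_mult[of 4 2] real_sqrt_mult[of 4 5] by simp_all
  moreover have "a = 0 \<and> b = 0 \<or> a = 1 \<and> b = 0 \<or> a = 0 \<and> b = 1"
    using assms by auto
  ultimately show ?thesis
    by (auto simp: power2_eq_square algebra_simps)
qed

locale spiro_chain =
  fixes q k :: nat and x y :: "nat \<Rightarrow> nat"
  assumes three_le_q: "3 \<le> q"
    and contact_lt: "\<And>i. i < k \<Longrightarrow> x i < q \<and> y i < q"
    and contact_dist: "\<And>i. i < k \<Longrightarrow> 2 \<le> cyc_dist q (x i) (y i)"
begin

definition rep :: "nat \<times> nat \<Rightarrow> nat \<times> nat" where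
  "rep = spiro_rep k x y"

definition succ :: "nat \<times> nat \<Rightarrow> nat \<times> nat" where
  "succ = (\<lambda>(i, j). (i, Suc j mod q))"

definition raw :: "(nat \<times> nat) set" where
  "raw = {0..<k} \<times> {0..<q}"

lemma rep_eq: "rep (i, j) = (if i + 1 < k \<and> j = y i then (i + 1, x (i + 1)) else (i, j))"
  by (simp add: rep_def spiro_rep_def)

lemma succ_eq: "succ (i, j) = (i, Suc j mod q)"
  by (simp add: succ_def)

lemma contact_nonadjacent:
  assumes "i < k"
  shows "x i \<noteq> y i" "y i \<noteq> Suc (x i) mod q" "x i \<noteq> Suc (y i) mod q"
  using cyc_dist_ge2_nonadjacent contact_lt[OF assms] contact_dist[OF assms] by auto

lemma Suc_mod_neq [simp]:
  assumes "j < q"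
  shows "Suc j mod q \<noteq> j" "j \<noteq> Suc j mod q"
    and "Suc (Suc j mod q) mod q \<noteq> j" "j \<noteq> Suc (Suc j mod q) mod q"
  using assms three_le_q by (auto simp: mod_Suc)

lemma finite_raw: "finite raw"
  by (simp add: raw_def)

lemma card_raw: "card raw = q * k"
  by (simp add: raw_def)

lemma bij_succ: "bij_betw succ raw raw"
proof -
  have "inj_on succ raw"
    by (auto simp: inj_on_def succ_def raw_def mod_Suc split: if_splits)
  moreover have "p \<in> succ ` raw" if "p \<in> raw" for p
  proof -
    obtain i j where p: "p = (i, j)" "i < k" "j < q"
      using \<open>p \<in> raw\<close> by (auto simp: raw_def)
    then have "p = succ (i, (j + q - 1) mod q)" "(i, (j + q - 1) mod q) \<in> raw"
      using three_le_q by (auto simp: succ_def raw_def mod_Suc_eq)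
    then show ?thesis
      by blast
  qed
  moreover have "succ ` raw \<subseteq> raw"
    using three_le_q by (auto simp: succ_def raw_def)
  ultimately show ?thesis
    by (auto simp: bij_betw_def)
qed

lemma rep_succ_neq: "p \<in> raw \<Longrightarrow> rep p \<noteq> rep (succ p)"
  using contact_nonadjacent by (cases p) (auto simp: raw_def rep_eq succ_eq)

lemma inj_on_raw_edge: "inj_on (\<lambda>p. {rep p, rep (succ p)}) raw"
proof (rule inj_onI)
  fix p p' assume "p \<in> raw" "p' \<in> raw" "{rep p, rep (succ p)} = {rep p', rep (succ p')}"
  then show "p = p'"
    using contact_lt contact_nonadjacent
    by (cases p; cases p') (auto simp: raw_def rep_eq succ_eq doubleton_eq_iff split: if_splits)
qed

lemma spiro_E_eq_image: "spiro_E q k x y = (\<lambda>p. {rep p, rep (succ p)}) ` raw"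
  unfolding spiro_E_def rep_def succ_def raw_def by auto blast

definition glue_count :: "nat \<times> nat \<Rightarrow> nat" where
  "glue_count = (\<lambda>(i, j).
     (if 0 < i \<and> j = x i then 1 else 0) + (if i + 1 < k \<and> j = y i then 1 else 0))"

lemma card_rep_fiber:
  assumes "p \<in> raw"
  shows "card {p' \<in> raw. rep p' = rep p} = 1 + glue_count p"
proof -
  obtain i j where p: "p = (i, j)" "i < k" "j < q"
    using assms by (auto simp: raw_def)
  consider "i + 1 < k" "j = y i" | "0 < i" "j = x i"
    | "\<not> (i + 1 < k \<and> j = y i)" "\<not> (0 < i \<and> j = x i)"
    by blast
  then show ?thesis
  proof cases
    case 1
    then have "{p' \<in> raw. rep p' = rep p} = {(i, y i), (i + 1, x (i + 1))}"
      using p contact_lt contact_nonadjacent by (auto simp: raw_def rep_eq split: if_splits)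
    then show ?thesis
      using 1 p contact_nonadjacent(1)[of i] by (auto simp: glue_count_def)
  next
    case 2
    then have "{p' \<in> raw. rep p' = rep p} = {(i - 1, y (i - 1)), (i, x i)}"
      using p contact_lt contact_nonadjacent by (auto simp: raw_def rep_eq split: if_splits)
    then show ?thesis
      using 2 p contact_nonadjacent(1)[of i] by (auto simp: glue_count_def)
  next
    case 3
    then have "{p' \<in> raw. rep p' = rep p} = {p}"
      using p contact_nonadjacent by (auto simp: raw_def rep_eq split: if_splits)
    then show ?thesis
      using 3 p by (auto simp: glue_count_def)
  qed
qed

lemma glue_count_edge_le:
  assumes "p \<in> raw"
  shows "glue_count p + glue_count (succ p) \<le> 1"
proof -
  obtain i j where "p = (i, j)" "i < k" "j < q"
    using assms by (auto simp: raw_def)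
  then show ?thesis
    using contact_nonadjacent[of i] by (auto simp: glue_count_def succ_eq)
qed

lemma sum_glue_count: "(\<Sum>p\<in>raw. glue_count p) = 2 * (k - 1)"
proof -
  have row: "(\<Sum>j<q. glue_count (i, j))
      = (if 0 < i then 1 else 0) + (if i + 1 < k then 1 else 0)"
    if "i < k" for i
    using contact_lt[OF that] by (simp add: glue_count_def sum.distrib)
  have "(\<Sum>p\<in>raw. glue_count p) = (\<Sum>i<k. \<Sum>j<q. glue_count (i, j))"
    by (simp add: raw_def sum.cartesian_product atLeast0LessThan)
  also have "\<dots> = (\<Sum>i<k. (if 0 < i then 1 else 0) + (if i + 1 < k then 1 else 0))"
    using row by simp
  also have "\<dots> = (k - 1) + (k - 1)"
  proof -
    have "(\<Sum>i<n. if 0 < i then 1 else 0 :: nat) = n - 1" for n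
      by (induction n) auto
    moreover have "(\<Sum>i<n. if i + 1 < k then 1 else 0 :: nat) = min n (k - 1)" for n
      by (induction n) auto
    ultimately show ?thesis
      by (simp add: sum.distrib)
  qed
  finally show ?thesis
    by simp
qed

lemma sombor_spiro_E:
  assumes "1 \<le> k"
  shows "sombor (spiro_E q k x y)
    = (2 * real q * real k - 8 * real k + 8) * sqrt 2 + (8 * real k - 8) * sqrt 5"
proof -
  let ?G = "\<Sum>p\<in>raw. real (glue_count p)"
  have "sombor (spiro_E q k x y)
      = (\<Sum>p\<in>raw. sqrt ((2 * real (card {p' \<in> raw. rep p' = rep p}))\<^sup>2
                        + (2 * real (card {p' \<in> raw. rep p' = rep (succ p)}))\<^sup>2))"
    unfolding spiro_E_eq_image
    by (rule sombor_image_edges[OF finite_raw bij_succ inj_on_raw_edge rep_succ_neq])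
  also have "\<dots> = (\<Sum>p\<in>raw. 2 * sqrt 2
                      + 2 * (sqrt 5 - sqrt 2) * (real (glue_count p) + real (glue_count (succ p))))"
  proof (rule sum.cong)
    fix p assume p: "p \<in> raw"
    have succ_p: "succ p \<in> raw"
      using p bij_succ by (auto simp: bij_betw_def)
    show "sqrt ((2 * real (card {p' \<in> raw. rep p' = rep p}))\<^sup>2
                   + (2 * real (card {p' \<in> raw. rep p' = rep (succ p)}))\<^sup>2)
      = 2 * sqrt 2 + 2 * (sqrt 5 - sqrt 2) * (real (glue_count p) + real (glue_count (succ p)))"
      unfolding card_rep_fiber[OF p] card_rep_fiber[OF succ_p]
      by (rule sqrt_spiro_edge_term[OF glue_count_edge_le[OF p]])
  qed simp
  also have "\<dots> = real (card raw) * (2 * sqrt 2) + 2 * (sqrt 5 - sqrt 2) * (2 * ?G)"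
    using sum.reindex_bij_betw[OF bij_succ, of "\<lambda>p. real (glue_count p)"]
    by (simp add: sum.distrib flip: sum_distrib_left)
  also have "?G = 2 * (real k - 1)"
    using assms by (simp add: sum_glue_count flip: of_nat_sum)
  finally show ?thesis
    by (simp add: card_raw algebra_simps)
qed

end

theorem mainTheorem7:
  fixes q h k :: nat and x y :: "nat \<Rightarrow> nat"
  assumes "q \<ge> 3" and "k \<ge> 1" and "h \<ge> 2" and "h \<le> q div 2"
    and "\<And>i. i < k \<Longrightarrow> x i < q \<and> y i < q \<and> cyc_dist q (x i) (y i) = h"
  shows "sombor (spiro_E q k x y)
      = (2 * real q * real k - 8 * real k + 8) * sqrt 2 + (8 * real k - 8) * sqrt 5"
proof -
  have "spiro_chain q k x y"
    using assms(1,3,5) by unfold_locales auto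
  then show ?thesis
    using assms(2) by (rule spiro_chain.sombor_spiro_E)
qed

end
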